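(* Let $(a_j)_{j\in\mathbb{N}_0}$ be a complex sequence with $\sum_j|a_j|<\infty$, let $(b_j)_{j\in\mathbb{N}_0}$ be a strictly increasing sequence of positive reals with $b_j\to\infty$, set $b_{-1}=0$ and $\Delta b_j=\min(b_j-b_{j-1},b_{j+1}-b_j)$, and let $f(t)=\sum_{j=0}^\infty a_je^{i b_jt}$. If for some $\alpha\in\,]0,1[$ the function $f$ is Hölder continuous of order $\alpha$ at some point $t_0\in\mathbb{R}$, then $\sup_j|a_j|(\Delta b_j)^\alpha<\infty$.
   Context: A function $g\colon\mathbb{R}\to\mathbb{C}$ is Hölder continuous of order $\alpha$ at $t_0$ if there exist constants $L>0$, $\eta>0$ such that $|g(t)-g(t_0)|\le L|t-t_0|^\alpha$ for all $t\in\,]t_0-\eta,t_0+\eta[$. *)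

theory Defs
  imports "HOL-Analysis.Analysis"
begin

definition holder_at :: "real \<Rightarrow> (real \<Rightarrow> complex) \<Rightarrow> real \<Rightarrow> bool" where
  "holder_at \<alpha> g t0 \<longleftrightarrow> (\<exists>L>0. \<exists>\<eta>>0. \<forall>t. \<bar>t - t0\<bar> < \<eta> \<longrightarrow>
      norm (g t - g t0) \<le> L * \<bar>t - t0\<bar> powr \<alpha>)"

definition bprev :: "(nat \<Rightarrow> real) \<Rightarrow> nat \<Rightarrow> real" where
  "bprev b j = (if j = 0 then 0 else b (j - 1))"

definition delta_b :: "(nat \<Rightarrow> real) \<Rightarrow> nat \<Rightarrow> real" where
  "delta_b b j = min (b j - bprev b j) (b (Suc j) - b j)"

end

theory Submission
  imports Defs
begin

text \<open>Integrate the increment \<open>f (t0 + s) - f t0\<close> against the Fejer kernel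
  \<open>K h s = (1 - cos (h s)) / s\<^sup>2\<close>, modulated by \<open>exp (- \<i> b j s)\<close>. The Fourier
  transform of \<open>K h\<close> is the triangle \<open>C * max 0 (h - \<bar>\<omega>\<bar>)\<close>, so for \<open>h = delta_b b j\<close>
  every frequency of the series other than \<open>b j\<close>, as well as the constant \<open>f t0\<close>, is
  annihilated and the integral equals \<open>C h a j exp (\<i> b j t0)\<close>. On the other hand the
  H\<ouml>lder bound, global because \<open>f\<close> is bounded, and the scaling law
  \<open>\<integral> K h s \<bar>s\<bar> powr \<alpha> ds = h powr (1 - \<alpha>) C\<^sub>\<alpha>\<close> bound the integral by
  \<open>L h powr (1 - \<alpha>) C\<^sub>\<alpha>\<close>. Hence \<open>\<bar>a j\<bar> h powr \<alpha> \<le> L C\<^sub>\<alpha> / C\<close> for every \<open>j\<close>.\<close>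

definition fejer_kernel :: "real \<Rightarrow> real \<Rightarrow> real" where
  "fejer_kernel h s = (1 - cos (h * s)) / s\<^sup>2"

lemma fejer_kernel_nonneg: "0 \<le> fejer_kernel h s"
  unfolding fejer_kernel_def by simp

lemma fejer_kernel_measurable [measurable]: "fejer_kernel h \<in> borel_measurable borel"
  unfolding fejer_kernel_def by measurable

lemma fejer_kernel_at_0 [simp]: "fejer_kernel h 0 = 0"
  \<comment> \<open>a junk value from division by zero; a single point does not affect any integral\<close>
  by (simp add: fejer_kernel_def)

lemma fejer_kernel_uminus [simp]: "fejer_kernel h (- s) = fejer_kernel h s"
  by (simp add: fejer_kernel_def)

lemma fejer_kernel_scale: "fejer_kernel h s = h\<^sup>2 * fejer_kernel 1 (h * s)"
  by (cases "h = 0") (auto simp: fejer_kernel_def power_mult_distrib)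

lemma fejer_kernel_le_half: "fejer_kernel 1 s \<le> 1/2"
proof (cases "s = 0")
  case False
  have "1 - cos s = 2 * (sin (s/2))\<^sup>2"
    using cos_double_sin[of "s/2"] by simp
  also have "\<dots> \<le> 2 * (s/2)\<^sup>2"
    using abs_sin_x_le_abs_x[of "s/2"] by (metis abs_le_square_iff mult_le_cancel_left_pos zero_less_numeral)
  finally show ?thesis
    using False by (simp add: fejer_kernel_def divide_le_eq power_divide)
qed simp

lemma fejer_kernel_le_inverse_square: "fejer_kernel 1 s \<le> 2 / s\<^sup>2"
  unfolding fejer_kernel_def
  by (intro divide_right_mono) (auto simp: algebra_simps, smt (verit) cos_ge_minus_one)

lemma integrable_powr_majorant:
  fixes e :: real
  assumes "e < -1"
  shows "integrable lborel (\<lambda>s. if \<bar>s\<bar> \<le> 1 then 1 else \<bar>s\<bar> powr e)"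
proof -
  have "((\<lambda>x. x powr e) has_integral -(1 powr (e+1)) / (e+1)) {1..}"
    by (rule has_integral_powr_to_inf) (use assms in auto)
  then have "(\<lambda>x. x powr e) absolutely_integrable_on {1..}"
    by (intro nonnegative_absolutely_integrable_1) (auto simp: integrable_on_def)
  then have right: "integrable lborel (\<lambda>x. indicator {1..} x * x powr e)"
    by (simp add: set_integrable_def integrable_completion)
  have left: "integrable lborel (\<lambda>x. indicator {1..} (0 + (-1) * x) * (0 + (-1) * x) powr e)"
    by (rule lborel_integrable_real_affine[OF right]) auto
  have "integrable lborel (\<lambda>x. indicator {-1..1} x + indicator {1..} x * x powr e
      + indicator {1..} (- x) * (- x) powr e)"
    using left right by simp
  then show ?thesis
    by (rule Bochner_Integration.integrable_bound) (auto simp: indicator_def)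
qed

lemma fejer_kernel_powr_le_majorant:
  assumes "0 \<le> \<beta>"
  shows "fejer_kernel 1 s * \<bar>s\<bar> powr \<beta> \<le> 2 * (if \<bar>s\<bar> \<le> 1 then 1 else \<bar>s\<bar> powr (\<beta> - 2))"
proof (cases "\<bar>s\<bar> \<le> 1")
  case True
  have "\<bar>s\<bar> powr \<beta> \<le> 1" using True assms by (simp add: powr_le1)
  then have "fejer_kernel 1 s * \<bar>s\<bar> powr \<beta> \<le> 1/2 * 1"
    by (intro mult_mono fejer_kernel_le_half) (auto simp: fejer_kernel_nonneg)
  with True show ?thesis by simp
next
  case False
  have "fejer_kernel 1 s * \<bar>s\<bar> powr \<beta> \<le> 2 / \<bar>s\<bar> powr 2 * \<bar>s\<bar> powr \<beta>"
    using fejer_kernel_le_inverse_square[of s] False by (intro mult_right_mono) auto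
  also have "\<dots> = 2 * \<bar>s\<bar> powr (\<beta> - 2)"
    using False by (simp add: powr_diff)
  finally show ?thesis using False by simp
qed

lemma fejer_kernel_powr_integrable_1:
  assumes "0 \<le> \<beta>" "\<beta> < 1"
  shows "integrable lborel (\<lambda>s. fejer_kernel 1 s * \<bar>s\<bar> powr \<beta>)"
proof (rule Bochner_Integration.integrable_bound)
  show "integrable lborel (\<lambda>s. 2 * (if \<bar>s\<bar> \<le> 1 then 1 else \<bar>s\<bar> powr (\<beta> - 2)))"
    using integrable_powr_majorant[of "\<beta> - 2"] assms by simp
  show "AE s in lborel. norm (fejer_kernel 1 s * \<bar>s\<bar> powr \<beta>)
      \<le> norm (2 * (if \<bar>s\<bar> \<le> 1 then 1 else \<bar>s\<bar> powr (\<beta> - 2)))"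
    using fejer_kernel_powr_le_majorant[OF assms(1)] fejer_kernel_nonneg
    by (intro AE_I2) (simp add: abs_mult)
qed simp

lemma fejer_kernel_powr_scale:
  \<comment> \<open>in the affine shape \<open>0 + h * s\<close> expected by \<open>lborel_integral_real_affine\<close>\<close>
  assumes "h \<noteq> 0"
  shows "fejer_kernel h s * \<bar>s\<bar> powr \<beta>
    = (h\<^sup>2 / \<bar>h\<bar> powr \<beta>) * (fejer_kernel 1 (0 + h * s) * \<bar>0 + h * s\<bar> powr \<beta>)"
  using assms by (subst fejer_kernel_scale) (simp add: abs_mult powr_mult)

lemma fejer_kernel_powr_integrable:
  assumes "0 \<le> \<beta>" "\<beta> < 1"
  shows "integrable lborel (\<lambda>s. fejer_kernel h s * \<bar>s\<bar> powr \<beta>)"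
proof (cases "h = 0")
  case False
  show ?thesis
    unfolding fejer_kernel_powr_scale[OF False]
    by (intro Bochner_Integration.integrable_mult_right
        lborel_integrable_real_affine[OF fejer_kernel_powr_integrable_1[OF assms]] False)
qed (simp add: fejer_kernel_def)

lemma integral_fejer_kernel_powr:
  assumes "0 \<le> \<beta>" "\<beta> < 1"
  shows "(LBINT s. fejer_kernel h s * \<bar>s\<bar> powr \<beta>)
    = \<bar>h\<bar> powr (1 - \<beta>) * (LBINT s. fejer_kernel 1 s * \<bar>s\<bar> powr \<beta>)"
proof (cases "h = 0")
  case False
  let ?G = "\<lambda>u. fejer_kernel 1 u * \<bar>u\<bar> powr \<beta>"
  have "(LBINT u. ?G u) = \<bar>h\<bar> * (LBINT s. ?G (0 + h * s))"
    using lborel_integral_real_affine[OF False, of ?G 0] by simp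
  moreover have "h\<^sup>2 = \<bar>h\<bar> powr (1 - \<beta>) * \<bar>h\<bar> * \<bar>h\<bar> powr \<beta>"
    using False by (simp add: mult.commute powr_add[symmetric] powr_mult_base)
  ultimately show ?thesis
    unfolding fejer_kernel_powr_scale[OF False] using False by simp
qed (simp add: fejer_kernel_def)

lemma fejer_kernel_times_powr_0: "fejer_kernel h s * \<bar>s\<bar> powr 0 = fejer_kernel h s"
  \<comment> \<open>\<open>0 powr 0 = 0\<close>, but the kernel vanishes at \<open>0\<close> as well\<close>
  by (cases "s = 0") simp_all

lemma fejer_kernel_integrable: "integrable lborel (fejer_kernel h)"
  using fejer_kernel_powr_integrable[of 0 h, unfolded fejer_kernel_times_powr_0] by simp

lemma integral_fejer_kernel:
  "(LBINT s. fejer_kernel h s) = \<bar>h\<bar> * (LBINT s. fejer_kernel 1 s)"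
  \<comment> \<open>not a simp rule: as a rewrite rule it loops at \<open>h = 1\<close>\<close>
  using integral_fejer_kernel_powr[of 0 h, unfolded fejer_kernel_times_powr_0] by simp

lemma integral_fejer_kernel_pos: "0 < (LBINT s. fejer_kernel 1 s)"
  \<comment> \<open>The integral is \<open>pi\<close>; positivity is all that is needed.\<close>
proof -
  define k :: real where "k = (1 - cos 1) / 4"
  have "cos 1 < cos (0::real)"
    by (rule cos_monotone_0_pi) (use pi_gt3 in auto)
  then have "0 < k" unfolding k_def by simp
  have "indicator {1..2} s * k \<le> fejer_kernel 1 s" for s :: real
  proof (cases "s \<in> {1..2}")
    case True
    then have "cos s \<le> cos 1"
      using pi_gt3 by (subst cos_mono_le_eq) auto
    then have "1 - cos 1 \<le> 1 - cos s" by simp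
    moreover have "s\<^sup>2 \<le> 4" "0 < s\<^sup>2"
      using True by (auto simp: power2_eq_square intro: order.trans[OF mult_mono[of s 2 s 2]])
    ultimately have "(1 - cos 1) / 4 \<le> (1 - cos s) / s\<^sup>2"
      by (intro frac_le) auto
    then show ?thesis using True by (simp add: k_def fejer_kernel_def)
  qed (simp add: fejer_kernel_nonneg)
  then have "(LBINT s. indicator {1..2::real} s * k) \<le> (LBINT s. fejer_kernel 1 s)"
    by (intro integral_mono fejer_kernel_integrable) (simp add: integrable_real_mult_indicator)
  with \<open>0 < k\<close> show ?thesis by simp
qed

lemma fejer_kernel_times_cos:
  "fejer_kernel h s * cos (l * s)
    = (fejer_kernel (l + h) s + fejer_kernel (l - h) s) / 2 - fejer_kernel l s"
proof (cases "s = 0")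
  case False
  have "cos ((l + h) * s) + cos ((l - h) * s) = 2 * cos (l * s) * cos (h * s)"
    by (simp add: distrib_right left_diff_distrib cos_add cos_diff)
  with False show ?thesis
    unfolding fejer_kernel_def by (simp add: field_simps) (simp flip: distrib_left)
qed simp

lemma integral_fejer_kernel_times_cos:
  "(LBINT s. fejer_kernel h s * cos (l * s))
    = (LBINT s. fejer_kernel 1 s) * ((\<bar>l + h\<bar> + \<bar>l - h\<bar>) / 2 - \<bar>l\<bar>)"
proof -
  have "(LBINT s. fejer_kernel h s * cos (l * s))
      = ((LBINT s. fejer_kernel (l + h) s) + (LBINT s. fejer_kernel (l - h) s)) / 2
        - (LBINT s. fejer_kernel l s)"
    unfolding fejer_kernel_times_cos by (simp add: fejer_kernel_integrable)
  also have "\<dots> = (LBINT s. fejer_kernel 1 s) * ((\<bar>l + h\<bar> + \<bar>l - h\<bar>) / 2 - \<bar>l\<bar>)"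
    using integral_fejer_kernel[of "l + h"] integral_fejer_kernel[of "l - h"]
      integral_fejer_kernel[of l]
    by (simp add: algebra_simps)
  finally show ?thesis .
qed

lemma integral_fejer_kernel_times_sin: "(LBINT s. fejer_kernel h s * sin (l * s)) = 0"
proof -
  have "(LBINT s. fejer_kernel h s * sin (l * s))
      = \<bar>-1\<bar> *\<^sub>R (LBINT s. fejer_kernel h (0 + -1 * s) * sin (l * (0 + -1 * s)))"
    by (rule lborel_integral_real_affine) simp
  also have "\<dots> = - (LBINT s. fejer_kernel h s * sin (l * s))"
    by simp
  finally show ?thesis by simp
qed

lemma fejer_kernel_times_exp_integrable:
  "integrable lborel (\<lambda>s. complex_of_real (fejer_kernel h s) * exp (\<i> * complex_of_real (l * s)))"
  by (rule Bochner_Integration.integrable_bound[OF fejer_kernel_integrable])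
    (auto intro!: AE_I2 simp: norm_mult)

lemma fourier_transform_fejer_kernel:
  assumes "0 \<le> h"
  shows "(\<integral>s. complex_of_real (fejer_kernel h s) * exp (\<i> * complex_of_real (l * s)) \<partial>lborel)
    = complex_of_real ((LBINT s. fejer_kernel 1 s) * max 0 (h - \<bar>l\<bar>))"
proof -
  let ?c = "\<lambda>s. fejer_kernel h s * cos (l * s)" and ?s = "\<lambda>s. fejer_kernel h s * sin (l * s)"
  have "complex_of_real (fejer_kernel h s) * exp (\<i> * complex_of_real (l * s))
      = complex_of_real (?c s) + \<i> * complex_of_real (?s s)" for s
    by (simp add: exp_Euler cos_of_real sin_of_real algebra_simps del: of_real_mult, simp)
  moreover have "integrable lborel ?c" "integrable lborel ?s"
    by (auto intro!: Bochner_Integration.integrable_bound[OF fejer_kernel_integrable[of h]] AE_I2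
        simp: abs_mult fejer_kernel_nonneg mult_left_le)
  then have "(\<integral>s. complex_of_real (?c s) + \<i> * complex_of_real (?s s) \<partial>lborel)
      = complex_of_real (LBINT s. ?c s) + \<i> * complex_of_real (LBINT s. ?s s)"
    by (subst Bochner_Integration.integral_add)
      (auto intro!: Bochner_Integration.integrable_mult_right simp del: of_real_mult)
  moreover have "(\<bar>l + h\<bar> + \<bar>l - h\<bar>) / 2 - \<bar>l\<bar> = max 0 (h - \<bar>l\<bar>)"
    using assms by (simp add: abs_if max_def)
  ultimately show ?thesis
    unfolding integral_fejer_kernel_times_cos integral_fejer_kernel_times_sin by simp
qed

lemma holder_at_global_bound:
  fixes g :: "real \<Rightarrow> complex"
  assumes "holder_at \<alpha> g t0" "0 \<le> \<alpha>" "\<And>t. norm (g t) \<le> M"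
  obtains L where "\<And>s. norm (g (t0 + s) - g t0) \<le> L * \<bar>s\<bar> powr \<alpha>"
proof -
  obtain L \<eta> where "L > 0" "\<eta> > 0"
    and holder: "\<And>t. \<bar>t - t0\<bar> < \<eta> \<Longrightarrow> norm (g t - g t0) \<le> L * \<bar>t - t0\<bar> powr \<alpha>"
    using assms(1) unfolding holder_at_def by blast
  have "0 \<le> M" using assms(3) norm_ge_zero order.trans by blast
  have "norm (g (t0 + s) - g t0) \<le> (L + 2 * M / \<eta> powr \<alpha>) * \<bar>s\<bar> powr \<alpha>" for s
  proof (cases "\<bar>s\<bar> < \<eta>")
    case True
    then have "norm (g (t0 + s) - g t0) \<le> L * \<bar>s\<bar> powr \<alpha>"
      using holder[of "t0 + s"] by simp
    also have "\<dots> \<le> (L + 2 * M / \<eta> powr \<alpha>) * \<bar>s\<bar> powr \<alpha>"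
      using \<open>0 \<le> M\<close> by (intro mult_right_mono) auto
    finally show ?thesis .
  next
    case False
    have "norm (g (t0 + s) - g t0) \<le> 2 * M"
      using norm_triangle_ineq4[of "g (t0 + s)" "g t0"] assms(3)[of "t0 + s"] assms(3)[of t0]
      by simp
    also have "\<dots> \<le> 2 * M / \<eta> powr \<alpha> * \<bar>s\<bar> powr \<alpha>"
    proof -
      have "\<eta> powr \<alpha> \<le> \<bar>s\<bar> powr \<alpha>"
        using False \<open>\<eta> > 0\<close> assms(2) by (intro powr_mono2) auto
      with \<open>\<eta> > 0\<close> \<open>0 \<le> M\<close> show ?thesis
        by (simp add: field_simps mult_left_mono)
    qed
    also have "\<dots> \<le> (L + 2 * M / \<eta> powr \<alpha>) * \<bar>s\<bar> powr \<alpha>"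
      using \<open>L > 0\<close> by (intro mult_right_mono) auto
    finally show ?thesis .
  qed
  then show ?thesis by (rule that)
qed

lemma integral_fejer_kernel_times_series:
  fixes c :: "nat \<Rightarrow> complex" and \<omega> :: "nat \<Rightarrow> real"
  assumes "summable (\<lambda>k. norm (c k))" "0 \<le> h"
  defines "S \<equiv> \<lambda>s. complex_of_real (fejer_kernel h s) * (\<Sum>k. c k * exp (\<i> * complex_of_real (\<omega> k * s)))"
  shows "integrable lborel S"
    and "integral\<^sup>L lborel S = (\<Sum>k. c k * complex_of_real ((LBINT s. fejer_kernel 1 s) * max 0 (h - \<bar>\<omega> k\<bar>)))"
proof -
  define u where "u k s = c k * (complex_of_real (fejer_kernel h s) * exp (\<i> * complex_of_real (\<omega> k * s)))"
    for k s
  have norm_u: "norm (u k s) = norm (c k) * fejer_kernel h s" for k s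
    by (simp add: u_def norm_mult fejer_kernel_nonneg)
  have "S s = (\<Sum>k. u k s)" for s
  proof -
    have "summable (\<lambda>k. c k * exp (\<i> * complex_of_real (\<omega> k * s)))"
      by (rule summable_norm_cancel) (use assms(1) in \<open>simp add: norm_mult\<close>)
    then show ?thesis
      unfolding S_def u_def by (subst suminf_mult[symmetric]) (simp_all add: algebra_simps)
  qed
  then have S_eq: "S = (\<lambda>s. \<Sum>k. u k s)" by blast
  have u_int: "integrable lborel (u k)" for k
    unfolding u_def by (intro Bochner_Integration.integrable_mult_right fejer_kernel_times_exp_integrable)
  have summable_u: "AE s in lborel. summable (\<lambda>k. norm (u k s))"
    by (intro AE_I2) (simp add: norm_u summable_mult2 assms(1))
  have summable_int_u: "summable (\<lambda>k. (\<integral>s. norm (u k s) \<partial>lborel))"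
    by (simp add: norm_u summable_mult2 assms(1))
  show "integrable lborel S"
    unfolding S_eq by (rule integrable_suminf[OF u_int summable_u summable_int_u])
  have "integral\<^sup>L lborel (u k)
      = c k * complex_of_real ((LBINT s. fejer_kernel 1 s) * max 0 (h - \<bar>\<omega> k\<bar>))" for k
    unfolding u_def integral_mult_right_zero fourier_transform_fejer_kernel[OF assms(2)] ..
  then show "integral\<^sup>L lborel S
      = (\<Sum>k. c k * complex_of_real ((LBINT s. fejer_kernel 1 s) * max 0 (h - \<bar>\<omega> k\<bar>)))"
    unfolding S_eq integral_suminf[OF u_int summable_u summable_int_u] by simp
qed

lemma integral_fejer_kernel_times_increment:
  fixes a :: "nat \<Rightarrow> complex" and b :: "nat \<Rightarrow> real" and t0 :: real
  assumes summable: "summable (\<lambda>k. norm (a k))"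
    and f: "\<And>t. f t = (\<Sum>k. a k * exp (\<i> * of_real (b k * t)))"
    and "0 < h" "h \<le> \<bar>b j\<bar>" and gap: "\<And>k. k \<noteq> j \<Longrightarrow> h \<le> \<bar>b k - b j\<bar>"
  defines "F \<equiv> \<lambda>s. complex_of_real (fejer_kernel h s) * (f (t0 + s) - f t0)
    * exp (\<i> * complex_of_real (- b j * s))"
  shows "integrable lborel F"
    and "integral\<^sup>L lborel F
      = a j * exp (\<i> * of_real (b j * t0)) * complex_of_real ((LBINT s. fejer_kernel 1 s) * h)"
proof -
  define c where "c k = a k * exp (\<i> * of_real (b k * t0))" for k
  have summable_c: "summable (\<lambda>k. norm (c k))"
    using summable by (simp add: c_def norm_mult)
  have shift: "f (t0 + s) * exp (\<i> * complex_of_real (- b j * s))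
      = (\<Sum>k. c k * exp (\<i> * complex_of_real ((b k - b j) * s)))" for s
  proof -
    have "f (t0 + s) * exp (\<i> * complex_of_real (- b j * s))
        = (\<Sum>k. a k * exp (\<i> * of_real (b k * (t0 + s))) * exp (\<i> * complex_of_real (- b j * s)))"
      unfolding f by (rule suminf_mult2, rule summable_norm_cancel) (use summable in \<open>simp add: norm_mult\<close>)
    also have "\<dots> = (\<Sum>k. c k * exp (\<i> * complex_of_real ((b k - b j) * s)))"
      by (simp add: c_def mult.assoc exp_add[symmetric] algebra_simps)
    finally show ?thesis .
  qed
  define S where "S \<equiv> \<lambda>s. complex_of_real (fejer_kernel h s)
    * (\<Sum>k. c k * exp (\<i> * complex_of_real ((b k - b j) * s)))"
  define E where "E \<equiv> \<lambda>s. complex_of_real (fejer_kernel h s) * exp (\<i> * complex_of_real (- b j * s))"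
  have "F s = S s - f t0 * E s" for s
  proof -
    have "F s = complex_of_real (fejer_kernel h s) * (f (t0 + s) * exp (\<i> * complex_of_real (- b j * s)))
        - f t0 * E s"
      unfolding F_def E_def by (simp add: algebra_simps)
    then show ?thesis unfolding shift S_def .
  qed
  then have F_eq: "F = (\<lambda>s. S s - f t0 * E s)" ..
  note series = integral_fejer_kernel_times_series[OF summable_c less_imp_le[OF \<open>0 < h\<close>],
      of "\<lambda>k. b k - b j", folded S_def]
  have terms: "c k * complex_of_real ((LBINT s. fejer_kernel 1 s) * max 0 (h - \<bar>b k - b j\<bar>))
      = (if k = j then c j * complex_of_real ((LBINT s. fejer_kernel 1 s) * h) else 0)" for k
    using gap[of k] \<open>0 < h\<close> by (cases "k = j") simp_all
  have integral_S: "integral\<^sup>L lborel S = c j * complex_of_real ((LBINT s. fejer_kernel 1 s) * h)"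
    unfolding series(2) terms
    using sums_single[of j "\<lambda>_. c j * complex_of_real ((LBINT s. fejer_kernel 1 s) * h)"]
    by (simp add: sums_iff)
  have "integral\<^sup>L lborel E = 0"
    unfolding E_def fourier_transform_fejer_kernel[OF less_imp_le[OF \<open>0 < h\<close>]]
    using \<open>h \<le> \<bar>b j\<bar>\<close> by simp
  moreover have "integrable lborel E"
    unfolding E_def by (rule fejer_kernel_times_exp_integrable)
  ultimately show "integrable lborel F" "integral\<^sup>L lborel F
      = a j * exp (\<i> * of_real (b j * t0)) * complex_of_real ((LBINT s. fejer_kernel 1 s) * h)"
    unfolding F_eq using series(1) integral_S by (simp_all add: c_def)
qed

lemma norm_coefficient_times_powr_le:
  fixes a :: "nat \<Rightarrow> complex" and b :: "nat \<Rightarrow> real" and t0 :: real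
  assumes summable: "summable (\<lambda>k. norm (a k))"
    and f: "\<And>t. f t = (\<Sum>k. a k * exp (\<i> * of_real (b k * t)))"
    and "0 \<le> \<alpha>" "\<alpha> < 1" and holder: "\<And>s. norm (f (t0 + s) - f t0) \<le> L * \<bar>s\<bar> powr \<alpha>"
    and "0 < h" "h \<le> \<bar>b j\<bar>" and gap: "\<And>k. k \<noteq> j \<Longrightarrow> h \<le> \<bar>b k - b j\<bar>"
  shows "norm (a j) * h powr \<alpha>
    \<le> L * (LBINT s. fejer_kernel 1 s * \<bar>s\<bar> powr \<alpha>) / (LBINT s. fejer_kernel 1 s)"
proof -
  define C where "C = (LBINT s. fejer_kernel 1 s)"
  define C\<^sub>\<alpha> where "C\<^sub>\<alpha> = (LBINT s. fejer_kernel 1 s * \<bar>s\<bar> powr \<alpha>)"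
  define F where "F \<equiv> \<lambda>s. complex_of_real (fejer_kernel h s) * (f (t0 + s) - f t0)
    * exp (\<i> * complex_of_real (- b j * s))"
  note F = integral_fejer_kernel_times_increment[OF summable f \<open>0 < h\<close> \<open>h \<le> \<bar>b j\<bar>\<close> gap,
      of t0, folded F_def C_def]
  have "0 < C" unfolding C_def by (rule integral_fejer_kernel_pos)
  have "norm (a j) * C * h = norm (integral\<^sup>L lborel F)"
    using \<open>0 < C\<close> \<open>0 < h\<close> by (simp add: F(2) norm_mult)
  also have "\<dots> \<le> (\<integral>s. norm (F s) \<partial>lborel)"
    by (rule integral_norm_bound)
  also have "\<dots> \<le> (\<integral>s. L * (fejer_kernel h s * \<bar>s\<bar> powr \<alpha>) \<partial>lborel)"
  proof (rule integral_mono)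
    show "integrable lborel (\<lambda>s. L * (fejer_kernel h s * \<bar>s\<bar> powr \<alpha>))"
      using fejer_kernel_powr_integrable[OF \<open>0 \<le> \<alpha>\<close> \<open>\<alpha> < 1\<close>] by simp
    fix s
    have "norm (F s) = fejer_kernel h s * norm (f (t0 + s) - f t0)"
      by (simp add: F_def norm_mult fejer_kernel_nonneg)
    then show "norm (F s) \<le> L * (fejer_kernel h s * \<bar>s\<bar> powr \<alpha>)"
      using mult_left_mono[OF holder[of s] fejer_kernel_nonneg[of h s]] by (simp add: ac_simps)
  qed (use F(1) in simp)
  also have "\<dots> = L * h powr (1 - \<alpha>) * C\<^sub>\<alpha>"
    using integral_fejer_kernel_powr[OF \<open>0 \<le> \<alpha>\<close> \<open>\<alpha> < 1\<close>, of h] \<open>0 < h\<close>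
    by (simp add: C\<^sub>\<alpha>_def)
  also have "\<dots> = L * C\<^sub>\<alpha> / h powr \<alpha> * h"
    using \<open>0 < h\<close> by (simp add: powr_diff)
  finally have "norm (a j) * C \<le> L * C\<^sub>\<alpha> / h powr \<alpha>"
    using \<open>0 < h\<close> by (rule mult_right_le_imp_le)
  with \<open>0 < C\<close> \<open>0 < h\<close> show ?thesis
    unfolding C_def[symmetric] C\<^sub>\<alpha>_def[symmetric] by (simp add: field_simps)
qed

lemma delta_b_pos:
  assumes "strict_mono b" "0 < b 0"
  shows "0 < delta_b b j"
  using assms by (cases j) (auto simp: delta_b_def bprev_def strict_mono_def)

lemma delta_b_le:
  assumes "strict_mono b" "0 < b 0"
  shows "delta_b b j \<le> b j"
proof -
  have "0 \<le> bprev b j"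
    using assms by (auto simp: bprev_def strict_mono_less_eq intro: order.trans[of _ "b 0"])
  then show ?thesis by (simp add: delta_b_def)
qed

lemma delta_b_le_dist:
  assumes "strict_mono b" "k \<noteq> j"
  shows "delta_b b j \<le> \<bar>b k - b j\<bar>"
proof (cases "k < j")
  case True
  then obtain i where "j = Suc i" "k \<le> i" by (cases j) auto
  then have "b k \<le> bprev b j"
    using assms(1) by (simp add: bprev_def strict_mono_less_eq)
  then show ?thesis by (simp add: delta_b_def)
next
  case False
  then have "b (Suc j) \<le> b k"
    using assms by (simp add: strict_mono_less_eq)
  then show ?thesis by (simp add: delta_b_def)
qed

theorem mainTheorem7:
  fixes a :: "nat \<Rightarrow> complex" and b :: "nat \<Rightarrow> real"
    and f :: "real \<Rightarrow> complex" and \<alpha> t0 :: real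
  assumes "summable (\<lambda>j. norm (a j))"
    and "strict_mono b" and "\<And>j. b j > 0" and "filterlim b at_top sequentially"
    and "\<And>t. f t = (\<Sum>j. a j * exp (\<i> * of_real (b j * t)))"
    and "0 < \<alpha>" and "\<alpha> < 1"
    and "holder_at \<alpha> f t0"
  shows "bdd_above (range (\<lambda>j. norm (a j) * (delta_b b j) powr \<alpha>))"
proof -
  have "norm (f t) \<le> (\<Sum>j. norm (a j))" for t
    using summable_norm[of "\<lambda>j. a j * exp (\<i> * of_real (b j * t))"] assms(1,5)
    by (simp add: norm_mult)
  then obtain L where holder: "\<And>s. norm (f (t0 + s) - f t0) \<le> L * \<bar>s\<bar> powr \<alpha>"
    using holder_at_global_bound[OF assms(8)] assms(6) by (metis less_imp_le)
  have "norm (a j) * delta_b b j powr \<alpha>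
      \<le> L * (LBINT s. fejer_kernel 1 s * \<bar>s\<bar> powr \<alpha>) / (LBINT s. fejer_kernel 1 s)" for j
    using assms(2,3,6,7) delta_b_pos[of b j] delta_b_le[of b j] delta_b_le_dist[of b _ j]
    by (intro norm_coefficient_times_powr_le[OF assms(1,5) _ _ holder]) auto
  then show ?thesis by (rule bdd_aboveI2)
qed

end
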